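(* Let $n\ge21$ and let $\mathcal{A}$, $\mathbb{P}_5$, $c_5$ be as in the context. If $c_5(3)-\frac{3}{4}c_5(1)\le 9.019$, then there exist constants $\delta_6,\dots,\delta_{21}\in(0,1/2]$ such that, with $\mathbb{P}_6,\dots,\mathbb{P}_{21}$ defined from $\mathbb{P}_5$ and these constants, $f_{21}(\mathcal{A}) := c_{21}(3)/\mu_{21} < 138.874$ (and $\mu_{21}>0$).
   Context: Let $p_k$ be the $k$th prime ($p_1=2,p_2=3,\dots$). Set $S_k=[p_k-1]=\{1,\dots,p_k-1\}$ for $2\le k\le21$ and $S_k=[p_k]$ for $22\le k\le n$, $Q=S_2\times\cdots\times S_n$, and $Q_k=S_2\times\cdots\times S_k$. A hyperplane is $A=A_2\times\cdots\times A_n\subseteq Q$ with each $A_k$ either $S_k$ or a singleton in $S_k$; $F(A)=\{k:A_k\text{ is a singleton}\}$; hyperplanes are parallel if they have the same $F$. $\mathcal{A}$ is a collection of hyperplanes in $Q$ with non-empty fixed-coordinate sets, no two parallel, no one contained in another, and such that if $F(A)=\{i\}$ for some $A\in\mathcal{A}$ then $i\ge22$. Write $\mathcal{A}=\{A_F:F\in\mathcal{F}\}$. A set $X\subseteq Q_k$ is identified with $X\times S_{k+1}\times\cdots\times S_n$; hyperplanes with $F\subseteq\{2,\dots,k\}$ are viewed as subsets of $Q_k$. Let $\mathcal{N}_k=\{F\in\mathcal{F}: k\in F\subseteq\{2,\dots,k\}\}$ and $B_k=\bigcup_{F\in\mathcal{N}_k}A_F\subseteq Q_k$. $\mathbb{P}_5$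 is a probability measure on $Q_5$ supported on $R_5$, the set of points of $Q_5$ not lying in any $A_F$ with $F\subseteq\{2,3,4,5\}$. For $6\le k\le 21$, given $\mathbb{P}_{k-1}$ on $Q_{k-1}$, let $\alpha_k(x)=|\{y\in S_k:(x,y)\in B_k\}|/|S_k|$ and set $\mathbb{P}_k(x,y)=\max\{0,\frac{\alpha_k(x)-\delta_k}{\alpha_k(x)(1-\delta_k)}\}\frac{\mathbb{P}_{k-1}(x)}{|S_k|}$ if $(x,y)\in B_k$, and $\mathbb{P}_k(x,y)=\min\{\frac{1}{1-\alpha_k(x)},\frac{1}{1-\delta_k}\}\frac{\mathbb{P}_{k-1}(x)}{|S_k|}$ otherwise. Let $\mu_k=1-\sum_{i=6}^k\mathbb{P}_i(B_i)$. For $I\subseteq\{2,3,4,5\}$, $c(I)=\max\{\mathbb{P}_5(H):H\text{ a hyperplane in }Q_5\text{ with }F(H)=I\}$ ($c(\emptyset)=1$), and for $k\ge5$, $c_k(x)=\sum_{I\subseteq\{2,3,4,5\}}c(I)x^{|I|}\prod_{j=6}^k\big(1+\frac{x}{(1-\delta_j)|S_j|}\big)$; in particular $c_5(x)=\sum_{I\subseteq\{2,3,4,5\}}c(I)x^{|I|}$. *)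

theory Defs
  imports Complex_Main "HOL-Library.Infinite_Set" "HOL-Library.FuncSet" "HOL-Computational_Algebra.Primes"
begin

text \<open>The k-th prime, with p 1 = 2, p 2 = 3, ...\<close>
definition pk :: "nat \<Rightarrow> nat" where
  "pk k = enumerate {p::nat. prime p} (k - 1)"

definition S :: "nat \<Rightarrow> nat set" where
  "S k = (if k \<le> 21 then {1..<pk k} else {1..pk k})"

text \<open>Q_m = S_2 x ... x S_m, points are extensional functions on {2..m}.\<close>
definition Qset :: "nat \<Rightarrow> (nat \<Rightarrow> nat) set" where
  "Qset m = PiE {2..m} S"

definition hyp :: "nat \<Rightarrow> nat set \<Rightarrow> (nat \<Rightarrow> nat) \<Rightarrow> (nat \<Rightarrow> nat) set" where
  "hyp m F v = {x \<in> Qset m. \<forall>j\<in>F. x j = v j}"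

text \<open>The collection \<A> = {A_F : F \<in> \<F>}, with A_F = hyp n F (a F), as in the context.\<close>
definition valid_collection :: "nat \<Rightarrow> nat set set \<Rightarrow> (nat set \<Rightarrow> nat \<Rightarrow> nat) \<Rightarrow> bool" where
  "valid_collection n \<F> a \<longleftrightarrow>
     (\<forall>F\<in>\<F>. F \<noteq> {} \<and> F \<subseteq> {2..n} \<and> (\<forall>k\<in>F. a F k \<in> S k)) \<and>
     (\<forall>F\<in>\<F>. \<forall>G\<in>\<F>. F \<noteq> G \<longrightarrow> \<not> hyp n F (a F) \<subseteq> hyp n G (a G)) \<and>
     (\<forall>F\<in>\<F>. \<forall>i. F = {i} \<longrightarrow> i \<ge> 22)"

definition R5 :: "nat set set \<Rightarrow> (nat set \<Rightarrow> nat \<Rightarrow> nat) \<Rightarrow> (nat \<Rightarrow> nat) set" where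
  "R5 \<F> a = {x \<in> Qset 5. \<forall>F\<in>\<F>. F \<subseteq> {2..5} \<longrightarrow> x \<notin> hyp 5 F (a F)}"

definition prob_on_R5 :: "nat set set \<Rightarrow> (nat set \<Rightarrow> nat \<Rightarrow> nat) \<Rightarrow> ((nat \<Rightarrow> nat) \<Rightarrow> real) \<Rightarrow> bool" where
  "prob_on_R5 \<F> a P5 \<longleftrightarrow>
     (\<forall>x\<in>Qset 5. P5 x \<ge> 0) \<and> (\<Sum>x\<in>Qset 5. P5 x) = 1 \<and>
     (\<forall>x\<in>Qset 5. x \<notin> R5 \<F> a \<longrightarrow> P5 x = 0)"

definition Bk :: "nat set set \<Rightarrow> (nat set \<Rightarrow> nat \<Rightarrow> nat) \<Rightarrow> nat \<Rightarrow> (nat \<Rightarrow> nat) set" where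
  "Bk \<F> a k = (\<Union>F\<in>{F\<in>\<F>. k \<in> F \<and> F \<subseteq> {2..k}}. hyp k F (a F))"

text \<open>alpha_k(x) for x \<in> Q_{k-1}; (x,y) is x(k := y).\<close>
definition alpha :: "nat set set \<Rightarrow> (nat set \<Rightarrow> nat \<Rightarrow> nat) \<Rightarrow> nat \<Rightarrow> (nat \<Rightarrow> nat) \<Rightarrow> real" where
  "alpha \<F> a k x = real (card {y \<in> S k. x(k := y) \<in> Bk \<F> a k}) / real (card (S k))"

fun Pk :: "nat set set \<Rightarrow> (nat set \<Rightarrow> nat \<Rightarrow> nat) \<Rightarrow> ((nat \<Rightarrow> nat) \<Rightarrow> real) \<Rightarrow> (nat \<Rightarrow> real)
           \<Rightarrow> nat \<Rightarrow> (nat \<Rightarrow> nat) \<Rightarrow> real" where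
  "Pk \<F> a P5 \<delta> k z =
     (if k \<le> 5 then P5 z else
       (let x = z(k := undefined); al = alpha \<F> a k x; d = \<delta> k;
            prev = Pk \<F> a P5 \<delta> (k - 1) x
        in if z \<in> Bk \<F> a k
           then max 0 ((al - d) / (al * (1 - d))) * prev / real (card (S k))
           else min (1 / (1 - al)) (1 / (1 - d)) * prev / real (card (S k))))"

declare Pk.simps [simp del]

definition mu :: "nat set set \<Rightarrow> (nat set \<Rightarrow> nat \<Rightarrow> nat) \<Rightarrow> ((nat \<Rightarrow> nat) \<Rightarrow> real) \<Rightarrow> (nat \<Rightarrow> real)
           \<Rightarrow> nat \<Rightarrow> real" where
  "mu \<F> a P5 \<delta> k = 1 - (\<Sum>i=6..k. \<Sum>z\<in>Bk \<F> a i. Pk \<F> a P5 \<delta> i z)"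

definition cI :: "((nat \<Rightarrow> nat) \<Rightarrow> real) \<Rightarrow> nat set \<Rightarrow> real" where
  "cI P5 I = Max ((\<lambda>v. \<Sum>x\<in>hyp 5 I v. P5 x) ` PiE I S)"

definition c5 :: "((nat \<Rightarrow> nat) \<Rightarrow> real) \<Rightarrow> real \<Rightarrow> real" where
  "c5 P5 t = (\<Sum>I\<in>Pow {2..5}. cI P5 I * t ^ card I)"

definition ck :: "((nat \<Rightarrow> nat) \<Rightarrow> real) \<Rightarrow> (nat \<Rightarrow> real) \<Rightarrow> nat \<Rightarrow> real \<Rightarrow> real" where
  "ck P5 \<delta> k t = c5 P5 t * (\<Prod>j=6..k. 1 + t / ((1 - \<delta> j) * real (card (S j))))"

end

(*
  Each step of the construction distorts P\<^sub>k\<^sub>-\<^sub>1 fibrewise: over x \<in> Q\<^sub>k\<^sub>-\<^sub>1 the points of B\<^sub>k lose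
  mass and the other points gain mass, by a factor at most 1 / (1 - \<delta>\<^sub>k), while the mass of the
  fibre is preserved. A hyperplane with fixed-coordinate set U has P\<^sub>k-mass
  at most c(U \<inter> {2..5}) times the product of 1 / ((1 - \<delta>\<^sub>j) |S\<^sub>j|) over j \<in> U, j \<ge> 6, and these
  bounds, summed with weight t^|U|, give c\<^sub>k(t). The mass removed at step k is
  \<Sum>\<^sub>x P\<^sub>k\<^sub>-\<^sub>1(x) max(0, (\<alpha>\<^sub>k(x) - \<delta>\<^sub>k) / (1 - \<delta>\<^sub>k)) \<le> M\<^sub>k \<Sum>\<^sub>x P\<^sub>k\<^sub>-\<^sub>1(x) \<alpha>\<^sub>k(x)\<^sup>2, and |S\<^sub>k| \<alpha>\<^sub>k(x) is at most
  the number of F \<in> \<N>\<^sub>k whose hyperplane A\<^sub>F meets the fibre over x. Expanding the square as a sum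
  over pairs F, F' bounds this second moment by hyperplane masses for the sets (F - {k}) \<union> (F' - {k});
  as every U arises as G \<union> G' from 3^|U| pairs, P\<^sub>k(B\<^sub>k) \<le> M\<^sub>k |S\<^sub>k|\<^sup>-\<^sup>2 (c\<^sub>k\<^sub>-\<^sub>1(3) - 2 c\<^sub>k\<^sub>-\<^sub>1(1) + 1).
  For explicit \<delta>\<^sub>k and M\<^sub>k, both c\<^sub>2\<^sub>1(3) and \<mu>\<^sub>2\<^sub>1 are then linear in c\<^sub>5(3) and c\<^sub>5(1), and the
  hypothesis together with c\<^sub>5(3) \<ge> 3 c\<^sub>5(1) - 2 and c\<^sub>5(1) \<ge> 1 gives the claim.
*)

theory Submission
  imports Defs
begin

section \<open>Real inequalities\<close>

lemma convex_quadratic_nonneg_int: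
  fixes a b c :: real and j :: int
  defines "q \<equiv> \<lambda>x. a * x ^ 2 - b * x + c" and "m \<equiv> real_of_int \<lfloor>b / (2 * a)\<rfloor>"
  assumes a: "0 < a" and at_m: "0 \<le> q m" and at_m1: "0 \<le> q (m + 1)"
  shows "0 \<le> q (real_of_int j)"
proof -
  have "m \<le> b / (2 * a)" "b / (2 * a) < m + 1"
    unfolding m_def by simp_all
  then have vertex: "2 * a * m \<le> b" "b \<le> 2 * a * (m + 1)"
    using a by (simp_all add: field_simps)
  have diff: "q y - q x = (y - x) * (a * (y + x) - b)" for x y
    by (simp add: q_def algebra_simps power2_eq_square)
  show ?thesis
  proof (cases "j \<le> \<lfloor>b / (2 * a)\<rfloor>")
    case True
    then have "real_of_int j \<le> m" by (simp add: m_def)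
    moreover have "a * (real_of_int j + m) \<le> a * (2 * m)"
      using \<open>real_of_int j \<le> m\<close> a by (intro mult_left_mono) auto
    ultimately have "0 \<le> (real_of_int j - m) * (a * (real_of_int j + m) - b)"
      using vertex(1) by (intro mult_nonpos_nonpos) (auto simp: mult_ac)
    then show ?thesis using diff[where x = m and y = "real_of_int j"] at_m by linarith
  next
    case False
    then have "m + 1 \<le> real_of_int j" by (simp add: m_def)
    moreover have "a * (2 * (m + 1)) \<le> a * (real_of_int j + (m + 1))"
      using \<open>m + 1 \<le> real_of_int j\<close> a by (intro mult_left_mono) auto
    ultimately have "0 \<le> (real_of_int j - (m + 1)) * (a * (real_of_int j + (m + 1)) - b)"
      using vertex(2) by (intro mult_nonneg_nonneg) (auto simp: mult_ac)
    then show ?thesis using diff[where x = "m + 1" and y = "real_of_int j"] at_m1 by linarith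
  qed
qed

text \<open>For \<open>\<alpha> = j / s\<close> the bound is the inequality \<open>q j \<ge> 0\<close>, which therefore only needs
  checking at the two integers around the vertex of \<open>q\<close>.\<close>

lemma excess_le_quadratic:
  fixes d M :: real and s j :: nat
  defines "q \<equiv> \<lambda>x. M * (1 - d) * x ^ 2 - real s * x + d * real s ^ 2"
    and "m \<equiv> real_of_int \<lfloor>real s / (2 * (M * (1 - d)))\<rfloor>"
  assumes d: "0 < d" "d < 1" and M: "0 < M" and s: "0 < s"
    and at_m: "0 \<le> q m" and at_m1: "0 \<le> q (m + 1)"
  shows "max 0 ((real j / real s - d) / (1 - d)) \<le> M * (real j / real s) ^ 2"
proof -
  have "0 \<le> q (real_of_int (int j))"
    using convex_quadratic_nonneg_int[OF _ at_m[unfolded q_def m_def] at_m1[unfolded q_def m_def],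
        where j = "int j"] M d
    unfolding q_def by simp
  then have quadratic: "real j * real s - d * real s ^ 2 \<le> M * (1 - d) * real j ^ 2"
    by (simp add: q_def algebra_simps power2_eq_square)
  have "(real j / real s - d) / (1 - d) = (real j * real s - d * real s ^ 2) / (real s ^ 2 * (1 - d))"
    using s d by (simp add: field_simps power2_eq_square)
  also have "\<dots> \<le> (M * (1 - d) * real j ^ 2) / (real s ^ 2 * (1 - d))"
    using quadratic s d by (intro divide_right_mono) auto
  also have "\<dots> = M * (real j / real s) ^ 2"
    using s d by (simp add: field_simps power2_eq_square)
  finally show ?thesis using M by simp
qed

text \<open>The factors by which \<^const>\<open>Pk\<close> rescales the points of a fibre of density \<open>\<alpha>\<close> inside and
  outside \<open>B\<^sub>k\<close>. At \<open>\<alpha> = 0\<close> resp. \<open>\<alpha> = 1\<close> they take the junk value \<open>x / 0 = 0\<close>, but then they are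
  only ever multiplied by \<open>\<alpha>\<close> resp. \<open>1 - \<alpha>\<close>.\<close>

definition shrink_factor :: "real \<Rightarrow> real \<Rightarrow> real" where
  "shrink_factor d \<alpha> = max 0 ((\<alpha> - d) / (\<alpha> * (1 - d)))"

definition boost_factor :: "real \<Rightarrow> real \<Rightarrow> real" where
  "boost_factor d \<alpha> = min (1 / (1 - \<alpha>)) (1 / (1 - d))"

lemma shrink_factor_bounds:
  assumes "0 \<le> \<alpha>" "0 < d" "d < 1"
  shows "0 \<le> shrink_factor d \<alpha>" "shrink_factor d \<alpha> \<le> 1 / (1 - d)"
proof -
  show "0 \<le> shrink_factor d \<alpha>" by (simp add: shrink_factor_def)
  show "shrink_factor d \<alpha> \<le> 1 / (1 - d)"
  proof (cases "\<alpha> \<le> d")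
    case True
    then have "(\<alpha> - d) / (\<alpha> * (1 - d)) \<le> 0" using assms by (intro divide_nonpos_nonneg) auto
    then show ?thesis using assms by (simp add: shrink_factor_def)
  next
    case False
    then have "(\<alpha> - d) / (\<alpha> * (1 - d)) \<le> 1 / (1 - d)" using assms by (simp add: divide_simps)
    then show ?thesis using assms by (simp add: shrink_factor_def)
  qed
qed

lemma boost_factor_bounds:
  assumes "\<alpha> \<le> 1" "d < 1"
  shows "0 \<le> boost_factor d \<alpha>" "boost_factor d \<alpha> \<le> 1 / (1 - d)"
  using assms by (simp_all add: boost_factor_def)

lemma mult_shrink_factor:
  assumes "0 \<le> \<alpha>" "0 < d" "d < 1"
  shows "\<alpha> * shrink_factor d \<alpha> = max 0 ((\<alpha> - d) / (1 - d))"
proof (cases "\<alpha> \<le> d")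
  case True
  then show ?thesis using assms unfolding shrink_factor_def
    by (cases "\<alpha> = 0") (auto simp: max_def divide_simps)
next
  case False
  then show ?thesis using assms unfolding shrink_factor_def by (auto simp: max_def divide_simps)
qed

lemma distortion_preserves_mass:
  assumes \<alpha>: "0 \<le> \<alpha>" "\<alpha> \<le> 1" and d: "0 < d" "d < 1"
  shows "\<alpha> * shrink_factor d \<alpha> + (1 - \<alpha>) * boost_factor d \<alpha> = 1"
proof (cases "\<alpha> \<le> d")
  case True
  have "1 / (1 - \<alpha>) \<le> 1 / (1 - d)" using True d by (intro divide_left_mono) auto
  then have "boost_factor d \<alpha> = 1 / (1 - \<alpha>)" by (simp add: boost_factor_def)
  moreover have "\<alpha> * shrink_factor d \<alpha> = 0"
    using mult_shrink_factor[OF \<alpha>(1) d] True d by (simp add: divide_nonpos_pos)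
  ultimately show ?thesis using True d by simp
next
  case False
  have "(1 - \<alpha>) * boost_factor d \<alpha> = (1 - \<alpha>) / (1 - d)"
  proof (cases "\<alpha> = 1")
    case False
    then have "1 / (1 - d) \<le> 1 / (1 - \<alpha>)"
      using \<open>\<not> \<alpha> \<le> d\<close> \<alpha> d by (intro divide_left_mono) auto
    then show ?thesis by (simp add: boost_factor_def)
  qed simp
  moreover have "\<alpha> * shrink_factor d \<alpha> = (\<alpha> - d) / (1 - d)"
    using mult_shrink_factor[OF \<alpha>(1) d] False d by simp
  ultimately show ?thesis
    using d by (simp add: diff_divide_distrib[symmetric] add_divide_distrib[symmetric])
qed

section \<open>Sums over subsets\<close>

lemma sum_if_mem:
  fixes u v :: "'b::comm_ring_1"
  assumes "finite A" "B \<subseteq> A"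
  shows "(\<Sum>y\<in>A. if y \<in> B then u else v)
       = of_nat (card B) * u + (of_nat (card A) - of_nat (card B)) * v"
proof -
  have "(\<Sum>y\<in>A. if y \<in> B then u else v) = (\<Sum>y\<in>B. u) + (\<Sum>y\<in>A - B. v)"
    using assms by (simp add: sum.If_cases Int_absorb1 Diff_eq)
  also have "\<dots> = of_nat (card B) * u + of_nat (card A - card B) * v"
    using assms by (simp add: card_Diff_subset finite_subset)
  finally show ?thesis using assms by (simp add: card_mono of_nat_diff)
qed

lemma sum_Pow_insert:
  assumes "finite A" "x \<notin> A"
  shows "(\<Sum>U\<in>Pow (insert x A). f U) = (\<Sum>U\<in>Pow A. f U) + (\<Sum>U\<in>Pow A. f (insert x U))"
proof -
  have "(\<Sum>U\<in>Pow (insert x A). f U) = (\<Sum>U\<in>Pow A. f U) + (\<Sum>U\<in>insert x ` Pow A. f U)"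
    unfolding Pow_insert using assms by (intro sum.union_disjoint) auto
  also have "(\<Sum>U\<in>insert x ` Pow A. f U) = (\<Sum>U\<in>Pow A. f (insert x U))"
    using assms by (subst sum.reindex) (auto intro!: inj_onI simp: insert_ident)
  finally show ?thesis .
qed

lemma sum_Pow_Pow_union:
  fixes f :: "'a set \<Rightarrow> 'b::comm_semiring_1"
  assumes "finite A"
  shows "(\<Sum>G\<in>Pow A. \<Sum>G'\<in>Pow A. f (G \<union> G')) = (\<Sum>U\<in>Pow A. 3 ^ card U * f U)"
  using assms
proof (induction A arbitrary: f rule: finite_induct)
  case (insert x A)
  have card: "card (insert x U) = Suc (card U)" if "U \<in> Pow A" for U
    using that insert.hyps by (auto intro: card_insert_disjoint finite_subset)
  have three: "z + (z + z) = 3 * z" for z :: 'b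
    by (simp only: numeral_Bit1 numeral_One distrib_right mult_1 add.assoc)
  let ?T = "\<Sum>G\<in>Pow A. \<Sum>G'\<in>Pow A. f (insert x (G \<union> G'))"
  have "(\<Sum>G\<in>Pow (insert x A). \<Sum>G'\<in>Pow (insert x A). f (G \<union> G'))
      = (\<Sum>G\<in>Pow A. \<Sum>G'\<in>Pow A. f (G \<union> G')) + (?T + (?T + ?T))"
    unfolding sum_Pow_insert[OF insert.hyps] by (simp add: sum.distrib) (simp only: add.assoc)
  also have "\<dots> = (\<Sum>G\<in>Pow A. \<Sum>G'\<in>Pow A. f (G \<union> G')) + 3 * ?T"
    using three[of ?T] by (rule arg_cong)
  also have "\<dots> = (\<Sum>U\<in>Pow A. 3 ^ card U * f U) + 3 * (\<Sum>U\<in>Pow A. 3 ^ card U * f (insert x U))"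
    using insert.IH[of f] insert.IH[of "\<lambda>U. f (insert x U)"] by simp
  also have "\<dots> = (\<Sum>U\<in>Pow (insert x A). 3 ^ card U * f U)"
    unfolding sum_Pow_insert[OF insert.hyps] using card by (simp add: sum_distrib_left mult.assoc)
  finally show ?case .
qed simp

lemma sum_nonempty_Pow_Pow_union:
  fixes f :: "'a set \<Rightarrow> 'b::comm_ring_1"
  assumes "finite A"
  shows "(\<Sum>G\<in>Pow A - {{}}. \<Sum>G'\<in>Pow A - {{}}. f (G \<union> G'))
       = (\<Sum>U\<in>Pow A. 3 ^ card U * f U) - 2 * (\<Sum>U\<in>Pow A. f U) + f {}"
proof -
  have remove_empty: "(\<Sum>G\<in>Pow A - {{}}. h G) = (\<Sum>G\<in>Pow A. h G) - h {}" for h :: "'a set \<Rightarrow> 'b"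
    using assms by (simp add: sum_diff1)
  have "(\<Sum>G\<in>Pow A - {{}}. \<Sum>G'\<in>Pow A - {{}}. f (G \<union> G'))
      = (\<Sum>G\<in>Pow A. \<Sum>G'\<in>Pow A. f (G \<union> G')) - (\<Sum>G\<in>Pow A. f G)
        - ((\<Sum>G'\<in>Pow A. f G') - f {})"
    unfolding remove_empty by (simp add: sum_subtractf)
  then show ?thesis
    by (simp add: sum_Pow_Pow_union[OF assms] algebra_simps)
qed

lemma sum_mult_card_sq:
  fixes w :: "'a \<Rightarrow> real"
  assumes X: "finite X" and N: "finite N" and T: "\<And>F. F \<in> N \<Longrightarrow> T F \<subseteq> X"
  shows "(\<Sum>x\<in>X. w x * real (card {F \<in> N. x \<in> T F}) ^ 2)
       = (\<Sum>F\<in>N. \<Sum>F'\<in>N. \<Sum>x\<in>T F \<inter> T F'. w x)"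
proof -
  have card_sq: "real (card {F \<in> N. x \<in> T F}) ^ 2
      = (\<Sum>F\<in>N. \<Sum>F'\<in>N. if x \<in> T F \<inter> T F' then 1 else 0)" for x
  proof -
    have "real (card {F \<in> N. x \<in> T F}) = (\<Sum>F\<in>N. if x \<in> T F then 1 else 0)"
      using N by (simp add: sum.inter_filter[symmetric])
    then have "real (card {F \<in> N. x \<in> T F}) ^ 2
        = (\<Sum>F\<in>N. \<Sum>F'\<in>N. (if x \<in> T F then 1 else 0) * (if x \<in> T F' then 1 else 0))"
      by (simp only: power2_eq_square sum_product)
    also have "\<dots> = (\<Sum>F\<in>N. \<Sum>F'\<in>N. if x \<in> T F \<inter> T F' then 1 else 0)"
      by (intro sum.cong) auto
    finally show ?thesis .
  qed
  have restrict: "(\<Sum>x\<in>X. if x \<in> T F \<inter> T F' then w x else 0) = (\<Sum>x\<in>T F \<inter> T F'. w x)"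
    if "F \<in> N" for F F'
  proof -
    have "X \<inter> (T F \<inter> T F') = T F \<inter> T F'" using T[OF that] by blast
    then show ?thesis using sum.inter_restrict[OF X, of w "T F \<inter> T F'"] by simp
  qed
  have "(\<Sum>x\<in>X. w x * real (card {F \<in> N. x \<in> T F}) ^ 2)
      = (\<Sum>x\<in>X. \<Sum>F\<in>N. \<Sum>F'\<in>N. if x \<in> T F \<inter> T F' then w x else 0)"
    unfolding card_sq sum_distrib_left by (auto intro!: sum.cong)
  also have "\<dots> = (\<Sum>F\<in>N. \<Sum>F'\<in>N. \<Sum>x\<in>X. if x \<in> T F \<inter> T F' then w x else 0)"
    by (subst sum.swap) (rule sum.cong[OF refl], rule sum.swap)
  also have "\<dots> = (\<Sum>F\<in>N. \<Sum>F'\<in>N. \<Sum>x\<in>T F \<inter> T F'. w x)"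
    by (intro sum.cong[OF refl] restrict)
  finally show ?thesis .
qed

section \<open>Enumerating the primes\<close>

lemma sorted_wrt_less_nth_le:
  fixes xs :: "'a::linorder list"
  assumes sorted: "sorted_wrt (<) xs" and x: "x \<in> set xs" and i: "i < length xs"
    and above: "i = 0 \<or> xs ! (i - 1) < x"
  shows "xs ! i \<le> x"
proof -
  obtain l where l: "l < length xs" "x = xs ! l" using x by (auto simp: in_set_conv_nth)
  show ?thesis
  proof (cases "i \<le> l")
    case True
    then show ?thesis
      using l sorted_wrt_nth_less[OF sorted, of i l] by (cases "i = l") (auto intro: less_imp_le)
  next
    case False
    then have "xs ! l \<le> xs ! (i - 1)"
      using l i sorted_wrt_nth_less[OF sorted, of l "i - 1"]
      by (cases "l = i - 1") (auto intro: less_imp_le)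
    then show ?thesis using above False l by auto
  qed
qed

lemma enumerate_eq_nth_of_sorted:
  fixes S :: "'a::wellorder set"
  assumes S: "infinite S" and sorted: "sorted_wrt (<) xs"
    and init: "set xs = S \<inter> {..last xs}" and i: "i < length xs"
  shows "enumerate S i = xs ! i"
proof -
  have below_last: "xs ! l \<le> last xs" if "l < length xs" for l
  proof -
    have "last xs = xs ! (length xs - 1)" using that by (intro last_conv_nth) auto
    then show ?thesis using that sorted_wrt_nth_less[OF sorted, of l "length xs - 1"]
      by (cases "l = length xs - 1") (auto intro: less_imp_le)
  qed
  have least: "xs ! l = (LEAST x. x \<in> S \<and> (l = 0 \<or> xs ! (l - 1) < x))" if l: "l < length xs" for l
  proof (rule Least_equality[symmetric])
    have "xs ! l \<in> S" using l init nth_mem[OF l] by blast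
    moreover have "l = 0 \<or> xs ! (l - 1) < xs ! l"
      using l sorted_wrt_nth_less[OF sorted, of "l - 1" l] by (cases l) auto
    ultimately show "xs ! l \<in> S \<and> (l = 0 \<or> xs ! (l - 1) < xs ! l)" ..
    fix x assume x: "x \<in> S \<and> (l = 0 \<or> xs ! (l - 1) < x)"
    show "xs ! l \<le> x"
    proof (cases "x \<le> last xs")
      case True
      then have "x \<in> set xs" using x init by blast
      then show ?thesis using sorted_wrt_less_nth_le[OF sorted _ l] x by blast
    qed (use below_last[OF l] in simp)
  qed
  show ?thesis
    using i
  proof (induction i)
    case 0
    then show ?case using least[OF 0] by (simp add: enumerate_0)
  next
    case (Suc i)
    then show ?case using least[OF Suc.prems] by (simp add: enumerate_Suc''[OF S])
  qed
qed

definition small_primes :: "nat list" where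
  "small_primes = [2, 3, 5, 7, 11, 13, 17, 19, 23, 29, 31, 37, 41, 43, 47, 53, 59, 61, 67, 71, 73]"

lemma pk_eq_small_primes:
  assumes "1 \<le> k" "k \<le> 21"
  shows "pk k = small_primes ! (k - 1)"
proof -
  have primes_upto: "set small_primes = {p. prime p} \<inter> {..last small_primes}"
  proof -
    have "last small_primes = 73" by (simp add: small_primes_def)
    then have "{p. prime p} \<inter> {..last small_primes} = Set.filter prime (set [0..<74])"
      by auto
    also have "\<dots> = set small_primes"
      unfolding small_primes_def by code_simp
    finally show ?thesis by simp
  qed
  have "sorted_wrt (<) small_primes" by (simp add: small_primes_def)
  then show ?thesis
    unfolding pk_def using assms
    by (intro enumerate_eq_nth_of_sorted primes_infinite primes_upto) (auto simp: small_primes_def)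
qed

lemma card_S_small: "k \<in> {1..21} \<Longrightarrow> card (S k) = small_primes ! (k - 1) - 1"
  by (simp add: S_def pk_eq_small_primes)

section \<open>The cube \<open>Q\<^sub>k\<close>\<close>

lemma one_mem_S: "1 \<in> S k"
  using prime_ge_2_nat[of "pk k"] enumerate_in_set[OF primes_infinite]
  by (auto simp: S_def pk_def)

lemma finite_S [simp]: "finite (S k)"
  by (simp add: S_def)

lemma card_S_pos: "0 < card (S k)"
  using one_mem_S[of k] card_gt_0_iff by fastforce

lemma finite_Qset [simp]: "finite (Qset m)"
  by (simp add: Qset_def finite_PiE)

lemma Qset_undefined: "x \<in> Qset (k - 1) \<Longrightarrow> 2 \<le> k \<Longrightarrow> x k = undefined"
  by (auto simp: Qset_def PiE_iff extensional_def)

lemma Qset_eq_image: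
  assumes "2 \<le> k"
  shows "Qset k = (\<lambda>(y, x). x(k := y)) ` (S k \<times> Qset (k - 1))"
    and "inj_on (\<lambda>(y, x). x(k := y)) (S k \<times> Qset (k - 1))"
proof -
  have insert: "{2..k} = insert k {2..k - 1}" and notin: "k \<notin> {2..k - 1}"
    using assms by auto
  show "Qset k = (\<lambda>(y, x). x(k := y)) ` (S k \<times> Qset (k - 1))"
    unfolding Qset_def insert by (rule PiE_insert_eq)
  show "inj_on (\<lambda>(y, x). x(k := y)) (S k \<times> Qset (k - 1))"
    unfolding Qset_def by (rule inj_combinator[OF notin])
qed

lemma sum_Qset_split:
  assumes "2 \<le> k"
  shows "(\<Sum>z\<in>Qset k. f z) = (\<Sum>x\<in>Qset (k - 1). \<Sum>y\<in>S k. f (x(k := y)))"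
proof -
  have "(\<Sum>z\<in>Qset k. f z) = (\<Sum>(y, x)\<in>S k \<times> Qset (k - 1). f (x(k := y)))"
    unfolding Qset_eq_image(1)[OF assms]
    by (subst sum.reindex[OF Qset_eq_image(2)[OF assms]]) (simp add: case_prod_unfold)
  also have "\<dots> = (\<Sum>y\<in>S k. \<Sum>x\<in>Qset (k - 1). f (x(k := y)))"
    by (simp add: sum.cartesian_product)
  finally show ?thesis by (simp add: sum.swap[of _ "S k"])
qed

lemma sum_hyp_eq: "(\<Sum>z\<in>hyp m V v. f z) = (\<Sum>z\<in>Qset m. if \<forall>j\<in>V. z j = v j then f z else 0)"
  unfolding hyp_def by (simp add: sum.inter_filter)

section \<open>The distorted measures\<close>

definition loss_coeff :: "(nat \<Rightarrow> real) \<Rightarrow> (nat \<Rightarrow> real) \<Rightarrow> real \<Rightarrow> real" where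
  "loss_coeff \<delta> M t = (\<Sum>k=6..21. M k / real (card (S k)) ^ 2 *
      (\<Prod>j=6..k - 1. 1 + t / ((1 - \<delta> j) * real (card (S j)))))"

locale distortion =
  fixes FF :: "nat set set" and a :: "nat set \<Rightarrow> nat \<Rightarrow> nat"
    and P5 :: "(nat \<Rightarrow> nat) \<Rightarrow> real" and \<delta> :: "nat \<Rightarrow> real"
  assumes P5_nonneg: "\<And>x. x \<in> Qset 5 \<Longrightarrow> 0 \<le> P5 x"
    and P5_sum: "(\<Sum>x\<in>Qset 5. P5 x) = 1"
    and delta_bounds: "\<And>j. j \<in> {6..21} \<Longrightarrow> 0 < \<delta> j \<and> \<delta> j < 1"
    and singleton_large: "\<And>i. {i} \<in> FF \<Longrightarrow> 22 \<le> i"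
begin

abbreviation P :: "nat \<Rightarrow> (nat \<Rightarrow> nat) \<Rightarrow> real" where
  "P \<equiv> Pk FF a P5 \<delta>"

definition Bk_fibre :: "nat \<Rightarrow> (nat \<Rightarrow> nat) \<Rightarrow> nat set" where
  "Bk_fibre k x = {y \<in> S k. x(k := y) \<in> Bk FF a k}"

definition max_cond_prob :: "nat \<Rightarrow> real" where
  "max_cond_prob j = 1 / ((1 - \<delta> j) * real (card (S j)))"

lemma Bk_fibre_subset: "Bk_fibre k x \<subseteq> S k"
  by (auto simp: Bk_fibre_def)

lemma alpha_eq: "alpha FF a k x = real (card (Bk_fibre k x)) / real (card (S k))"
  by (simp add: alpha_def Bk_fibre_def)

lemma alpha_bounds: "0 \<le> alpha FF a k x" "alpha FF a k x \<le> 1"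
  using card_mono[OF finite_S Bk_fibre_subset] card_S_pos[of k]
  by (simp_all add: alpha_eq divide_le_eq_1)

lemma Pk_fibre:
  assumes "6 \<le> k" "x \<in> Qset (k - 1)" "y \<in> S k"
  shows "P k (x(k := y)) =
    (if y \<in> Bk_fibre k x then shrink_factor (\<delta> k) (alpha FF a k x)
     else boost_factor (\<delta> k) (alpha FF a k x)) * (P (k - 1) x / real (card (S k)))"
proof -
  have "x(k := undefined) = x" using Qset_undefined[OF assms(2)] assms(1) by auto
  moreover have "x(k := y) \<in> Bk FF a k \<longleftrightarrow> y \<in> Bk_fibre k x"
    using assms(3) by (simp add: Bk_fibre_def)
  ultimately show ?thesis
    using assms(1) by (subst Pk.simps) (simp add: Let_def shrink_factor_def boost_factor_def)
qed

lemma sum_Pk_fibre: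
  assumes k: "k \<in> {6..21}" and x: "x \<in> Qset (k - 1)"
  shows "(\<Sum>y\<in>S k. P k (x(k := y))) = P (k - 1) x"
proof -
  let ?\<alpha> = "alpha FF a k x"
  have "(\<Sum>y\<in>S k. P k (x(k := y)))
      = (\<Sum>y\<in>S k. if y \<in> Bk_fibre k x then shrink_factor (\<delta> k) ?\<alpha> else boost_factor (\<delta> k) ?\<alpha>)
        * (P (k - 1) x / real (card (S k)))"
    unfolding sum_distrib_right using k x by (intro sum.cong) (simp_all add: Pk_fibre)
  also have "\<dots> = (?\<alpha> * shrink_factor (\<delta> k) ?\<alpha> + (1 - ?\<alpha>) * boost_factor (\<delta> k) ?\<alpha>) * P (k - 1) x"
    using card_S_pos[of k] one_mem_S[of k]
    by (simp add: sum_if_mem[OF finite_S Bk_fibre_subset] alpha_eq divide_simps)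
      (auto simp: algebra_simps)
  finally show ?thesis
    using distortion_preserves_mass[OF alpha_bounds delta_bounds[OF k, THEN conjunct1]
        delta_bounds[OF k, THEN conjunct2]] by simp
qed

lemma sum_Pk_Bk_fibre:
  assumes k: "k \<in> {6..21}" and x: "x \<in> Qset (k - 1)"
  shows "(\<Sum>y\<in>Bk_fibre k x. P k (x(k := y)))
       = P (k - 1) x * max 0 ((alpha FF a k x - \<delta> k) / (1 - \<delta> k))"
proof -
  let ?\<alpha> = "alpha FF a k x"
  have "(\<Sum>y\<in>Bk_fibre k x. P k (x(k := y)))
      = real (card (Bk_fibre k x)) * shrink_factor (\<delta> k) ?\<alpha> * (P (k - 1) x / real (card (S k)))"
    using k x Bk_fibre_subset by (simp add: Pk_fibre subset_iff)
  also have "\<dots> = ?\<alpha> * shrink_factor (\<delta> k) ?\<alpha> * P (k - 1) x"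
    by (simp add: alpha_eq)
  finally show ?thesis
    using mult_shrink_factor[OF alpha_bounds(1) delta_bounds[OF k, THEN conjunct1]
        delta_bounds[OF k, THEN conjunct2]] by simp
qed

lemma Pk_fibre_le:
  assumes k: "k \<in> {6..21}" and x: "x \<in> Qset (k - 1)" and y: "y \<in> S k"
    and p: "0 \<le> P (k - 1) x"
  shows "0 \<le> P k (x(k := y))" "P k (x(k := y)) \<le> max_cond_prob k * P (k - 1) x"
proof -
  define C where "C = (if y \<in> Bk_fibre k x then shrink_factor (\<delta> k) (alpha FF a k x)
    else boost_factor (\<delta> k) (alpha FF a k x))"
  have fibre: "P k (x(k := y)) = C * (P (k - 1) x / real (card (S k)))"
    using k x y by (simp add: Pk_fibre C_def)
  have C: "0 \<le> C" "C \<le> 1 / (1 - \<delta> k)"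
    using shrink_factor_bounds[OF alpha_bounds(1)] boost_factor_bounds[OF alpha_bounds(2)]
      delta_bounds[OF k] by (simp_all add: C_def)
  have q: "0 \<le> P (k - 1) x / real (card (S k))" using p by simp
  show "0 \<le> P k (x(k := y))"
    unfolding fibre using C(1) q by (rule mult_nonneg_nonneg)
  have "C * (P (k - 1) x / real (card (S k))) \<le> 1 / (1 - \<delta> k) * (P (k - 1) x / real (card (S k)))"
    using C(2) q by (rule mult_right_mono)
  then show "P k (x(k := y)) \<le> max_cond_prob k * P (k - 1) x"
    unfolding fibre max_cond_prob_def by simp
qed

lemma Pk_nonneg: "5 \<le> k \<Longrightarrow> k \<le> 21 \<Longrightarrow> z \<in> Qset k \<Longrightarrow> 0 \<le> P k z"
proof (induction k arbitrary: z rule: dec_induct)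
  case base
  then show ?case using P5_nonneg by (simp add: Pk.simps)
next
  case (step k)
  then obtain x y where x: "x \<in> Qset k" and y: "y \<in> S (Suc k)" and z: "z = x(Suc k := y)"
    using Qset_eq_image(1)[of "Suc k"] by auto
  have "0 \<le> P (Suc k) (x(Suc k := y))"
    using step x y by (intro Pk_fibre_le(1)) simp_all
  then show ?case unfolding z .
qed

lemma cI_empty: "cI P5 {} = 1"
proof -
  have "hyp 5 {} v = Qset 5" for v by (simp add: hyp_def)
  then show ?thesis unfolding cI_def using P5_sum by simp
qed

lemma cI_nonneg: "0 \<le> cI P5 V" if "finite V"
proof -
  obtain u where u: "u \<in> PiE V S" using one_mem_S by (metis PiE_eq_empty_iff all_not_in_conv)
  have "0 \<le> (\<Sum>x\<in>hyp 5 V u. P5 x)" using P5_nonneg by (intro sum_nonneg) (auto simp: hyp_def)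
  also have "\<dots> \<le> cI P5 V" unfolding cI_def using that u by (intro Max_ge) (auto simp: finite_PiE)
  finally show ?thesis .
qed

lemma hyp_mass_le_cI:
  assumes V: "V \<subseteq> {2..5}"
  shows "(\<Sum>x\<in>hyp 5 V v. P5 x) \<le> cI P5 V"
proof (cases "\<forall>j\<in>V. v j \<in> S j")
  case True
  have "restrict v V \<in> PiE V S" "hyp 5 V (restrict v V) = hyp 5 V v"
    using True by (auto simp: hyp_def)
  then show ?thesis unfolding cI_def using V finite_subset
    by (metis (no_types, lifting) Max_ge finite_PiE finite_S finite_atLeastAtMost finite_imageI
        image_eqI)
next
  case False
  then obtain j where j: "j \<in> V" "v j \<notin> S j" by blast
  have "x \<notin> hyp 5 V v" for x
  proof
    assume "x \<in> hyp 5 V v"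
    then have "x \<in> Qset 5" "x j = v j" using j(1) by (auto simp: hyp_def)
    moreover have "j \<in> {2..5}" using j(1) V by blast
    ultimately show False using PiE_mem[of x "{2..5}" S j] j(2) by (simp add: Qset_def)
  qed
  then have "hyp 5 V v = {}" by blast
  then show ?thesis using cI_nonneg[of V] V finite_subset by fastforce
qed

definition hyp_mass_bound :: "nat set \<Rightarrow> real" where
  "hyp_mass_bound U = cI P5 (U \<inter> {2..5}) * (\<Prod>j\<in>U - {2..5}. max_cond_prob j)"

lemma max_cond_prob_pos: "j \<in> {6..21} \<Longrightarrow> 0 < max_cond_prob j"
  using delta_bounds[of j] card_S_pos[of j] by (simp add: max_cond_prob_def)

lemma hyp_mass_bound_nonneg:
  assumes "U \<subseteq> {2..21}"
  shows "0 \<le> hyp_mass_bound U"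
proof -
  have "0 \<le> max_cond_prob j" if "j \<in> U - {2..5}" for j
    using that assms max_cond_prob_pos[of j] by force
  then show ?thesis unfolding hyp_mass_bound_def
    by (intro mult_nonneg_nonneg cI_nonneg prod_nonneg) auto
qed

lemma hyp_mass_bound_empty: "hyp_mass_bound {} = 1"
  by (simp add: hyp_mass_bound_def cI_empty)

lemma hyp_mass_bound_insert:
  assumes "U \<subseteq> {2..k}" "5 \<le> k"
  shows "hyp_mass_bound (insert (Suc k) U) = hyp_mass_bound U * max_cond_prob (Suc k)"
proof -
  have "insert (Suc k) U \<inter> {2..5} = U \<inter> {2..5}"
    and "insert (Suc k) U - {2..5} = insert (Suc k) (U - {2..5})"
    and "Suc k \<notin> U - {2..5}" "finite (U - {2..5})"
    using assms finite_subset by auto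
  then show ?thesis unfolding hyp_mass_bound_def by (simp add: mult.commute mult.left_commute)
qed

lemma fibre_hyp_mass_le:
  assumes k: "k \<in> {6..21}" and x: "x \<in> Qset (k - 1)"
  shows "(\<Sum>y\<in>S k. if \<forall>j\<in>V. (x(k := y)) j = v j then P k (x(k := y)) else 0)
       \<le> (if \<forall>j\<in>V - {k}. x j = v j then (if k \<in> V then max_cond_prob k else 1) * P (k - 1) x else 0)"
proof -
  have p: "0 \<le> P (k - 1) x" using x k by (intro Pk_nonneg) auto
  have agree: "(\<forall>j\<in>V. (x(k := y)) j = v j)
      \<longleftrightarrow> (\<forall>j\<in>V - {k}. x j = v j) \<and> (k \<in> V \<longrightarrow> y = v k)" for y
    by auto
  show ?thesis
  proof (cases "\<forall>j\<in>V - {k}. x j = v j")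
    case outside: False
    then have "\<not> (\<forall>j\<in>V. (x(k := y)) j = v j)" for y unfolding agree by blast
    then have "(\<Sum>y\<in>S k. if \<forall>j\<in>V. (x(k := y)) j = v j then P k (x(k := y)) else 0) = 0"
      by (intro sum.neutral ballI if_not_P) blast
    then show ?thesis unfolding if_not_P[OF outside] by simp
  next
    case inside: True
    show ?thesis
    proof (cases "k \<in> V")
      case False
      then show ?thesis unfolding agree using inside sum_Pk_fibre[OF k x] by simp
    next
      case True
      have "(\<Sum>y\<in>S k. if \<forall>j\<in>V. (x(k := y)) j = v j then P k (x(k := y)) else 0)
          = (if v k \<in> S k then P k (x(k := v k)) else 0)"
        unfolding agree using inside True by (simp add: sum.delta)
      also have "\<dots> \<le> max_cond_prob k * P (k - 1) x"
        using Pk_fibre_le[OF k x _ p] max_cond_prob_pos[OF k] p by auto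
      finally show ?thesis using inside True by simp
    qed
  qed
qed

lemma hyp_mass_step:
  assumes k: "k \<in> {6..21}"
  shows "(\<Sum>z\<in>hyp k V v. P k z)
       \<le> (if k \<in> V then max_cond_prob k else 1) * (\<Sum>x\<in>hyp (k - 1) (V - {k}) v. P (k - 1) x)"
proof -
  let ?c = "if k \<in> V then max_cond_prob k else 1"
  have "(\<Sum>z\<in>hyp k V v. P k z) = (\<Sum>x\<in>Qset (k - 1). \<Sum>y\<in>S k.
          if \<forall>j\<in>V. (x(k := y)) j = v j then P k (x(k := y)) else 0)"
    using k by (simp add: sum_hyp_eq sum_Qset_split)
  also have "\<dots> \<le> (\<Sum>x\<in>Qset (k - 1). if \<forall>j\<in>V - {k}. x j = v j then ?c * P (k - 1) x else 0)"
    using k by (intro sum_mono fibre_hyp_mass_le)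
  also have "\<dots> = ?c * (\<Sum>x\<in>hyp (k - 1) (V - {k}) v. P (k - 1) x)"
    by (simp add: sum_hyp_eq sum_distrib_left if_distrib cong: if_cong)
  finally show ?thesis .
qed

lemma hyp_mass_le:
  assumes "5 \<le> k" "k \<le> 21" "V \<subseteq> {2..k}"
  shows "(\<Sum>z\<in>hyp k V v. P k z) \<le> hyp_mass_bound V"
  using assms
proof (induction k arbitrary: V rule: dec_induct)
  case base
  then have "V \<inter> {2..5} = V" and no_weights: "V - {2..5} = {}" by auto
  then show ?case using hyp_mass_le_cI[of V v] base by (simp add: Pk.simps hyp_mass_bound_def no_weights)
next
  case (step k)
  have k: "Suc k \<in> {6..21}" using step by simp
  let ?c = "if Suc k \<in> V then max_cond_prob (Suc k) else 1"
  have "(\<Sum>z\<in>hyp (Suc k) V v. P (Suc k) z) \<le> ?c * (\<Sum>x\<in>hyp k (V - {Suc k}) v. P k x)"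
    using hyp_mass_step[OF k] by simp
  also have "\<dots> \<le> ?c * hyp_mass_bound (V - {Suc k})"
  proof (rule mult_left_mono)
    show "(\<Sum>x\<in>hyp k (V - {Suc k}) v. P k x) \<le> hyp_mass_bound (V - {Suc k})"
      using step.prems by (intro step.IH) auto
  qed (use max_cond_prob_pos[OF k] in auto)
  also have "\<dots> = hyp_mass_bound V"
  proof (cases "Suc k \<in> V")
    case True
    have "V - {Suc k} \<subseteq> {2..k}" using step.prems by auto
    from hyp_mass_bound_insert[OF this \<open>5 \<le> k\<close>] show ?thesis
      using True by (simp add: insert_absorb mult.commute)
  qed simp
  finally show ?case .
qed

lemma sum_Pow_hyp_mass_bound:
  assumes "5 \<le> m"
  shows "(\<Sum>U\<in>Pow {2..m}. t ^ card U * hyp_mass_bound U) = ck P5 \<delta> m t"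
  using assms
proof (induction m rule: dec_induct)
  case base
  have "hyp_mass_bound U = cI P5 U" if "U \<in> Pow {2..5}" for U
    using that by (simp add: hyp_mass_bound_def Int_absorb2 Diff_eq_empty_iff[THEN iffD2])
  then show ?case unfolding ck_def c5_def by (simp add: mult.commute)
next
  case (step m)
  have insert: "{2..Suc m} = insert (Suc m) {2..m}" using step by auto
  have card: "card (insert (Suc m) U) = Suc (card U)" if "U \<in> Pow {2..m}" for U
  proof -
    have "finite U" "Suc m \<notin> U" using that finite_subset by auto
    then show ?thesis by simp
  qed
  have "(\<Sum>U\<in>Pow {2..Suc m}. t ^ card U * hyp_mass_bound U)
      = (\<Sum>U\<in>Pow {2..m}. t ^ card U * hyp_mass_bound U)
        + (\<Sum>U\<in>Pow {2..m}. t ^ card (insert (Suc m) U) * hyp_mass_bound (insert (Suc m) U))"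
    unfolding insert by (rule sum_Pow_insert) auto
  also have "(\<Sum>U\<in>Pow {2..m}. t ^ card (insert (Suc m) U) * hyp_mass_bound (insert (Suc m) U))
      = t * max_cond_prob (Suc m) * (\<Sum>U\<in>Pow {2..m}. t ^ card U * hyp_mass_bound U)"
    unfolding sum_distrib_left using card hyp_mass_bound_insert step by (intro sum.cong) auto
  finally show ?case
    using step unfolding ck_def by (simp add: prod.cl_ivl_Suc max_cond_prob_def algebra_simps)
qed

lemma sum_Pk_Bk:
  assumes k: "k \<in> {6..21}"
  shows "(\<Sum>z\<in>Bk FF a k. P k z)
       = (\<Sum>x\<in>Qset (k - 1). P (k - 1) x * max 0 ((alpha FF a k x - \<delta> k) / (1 - \<delta> k)))"
proof -
  have "Bk FF a k \<subseteq> Qset k" by (auto simp: Bk_def hyp_def)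
  then have "(\<Sum>z\<in>Bk FF a k. P k z) = (\<Sum>z\<in>Qset k. if z \<in> Bk FF a k then P k z else 0)"
    by (simp add: sum.If_cases Int_absorb1)
  also have "\<dots> = (\<Sum>x\<in>Qset (k - 1). \<Sum>y\<in>Bk_fibre k x. P k (x(k := y)))"
    using k by (simp add: sum_Qset_split Bk_fibre_def sum.inter_filter)
  also have "\<dots> = (\<Sum>x\<in>Qset (k - 1). P (k - 1) x * max 0 ((alpha FF a k x - \<delta> k) / (1 - \<delta> k)))"
    using sum_Pk_Bk_fibre[OF k] by simp
  finally show ?thesis .
qed

definition Nk :: "nat \<Rightarrow> nat set set" where
  "Nk k = {F \<in> FF. k \<in> F \<and> F \<subseteq> {2..k}}"

text \<open>The trace of \<open>A\<^sub>F\<close>, \<open>F \<in> \<N>\<^sub>k\<close>, on \<open>Q\<^sub>k\<^sub>-\<^sub>1\<close>: the points \<open>x\<close> whose fibre meets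
  \<open>A\<^sub>F\<close>.\<close>

definition trace_hyp :: "nat \<Rightarrow> nat set \<Rightarrow> (nat \<Rightarrow> nat) set" where
  "trace_hyp k F = hyp (k - 1) (F - {k}) (a F)"

lemma card_Bk_fibre_le:
  assumes x: "x \<in> Qset (k - 1)"
  shows "card (Bk_fibre k x) \<le> card {F \<in> Nk k. x \<in> trace_hyp k F}"
proof -
  have finite: "finite (Nk k)"
    by (rule finite_subset[of _ "Pow {2..k}"]) (auto simp: Nk_def)
  have "Bk_fibre k x \<subseteq> (\<lambda>F. a F k) ` {F \<in> Nk k. x \<in> trace_hyp k F}"
  proof
    fix y assume "y \<in> Bk_fibre k x"
    then obtain F where F: "F \<in> Nk k" "x(k := y) \<in> hyp k F (a F)"
      by (auto simp: Bk_fibre_def Bk_def Nk_def)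
    then have agree: "\<forall>j\<in>F. (x(k := y)) j = a F j" and "k \<in> F"
      by (auto simp: hyp_def Nk_def)
    have "\<forall>j\<in>F - {k}. x j = a F j"
    proof
      fix j assume "j \<in> F - {k}"
      then show "x j = a F j" using agree by (metis DiffE fun_upd_other singletonI)
    qed
    then have "y = a F k" "x \<in> trace_hyp k F"
      using agree \<open>k \<in> F\<close> x by (auto simp: hyp_def trace_hyp_def)
    then show "y \<in> (\<lambda>F. a F k) ` {F \<in> Nk k. x \<in> trace_hyp k F}" using F by auto
  qed
  then have "card (Bk_fibre k x) \<le> card ((\<lambda>F. a F k) ` {F \<in> Nk k. x \<in> trace_hyp k F})"
    using finite by (intro card_mono) auto
  also have "\<dots> \<le> card {F \<in> Nk k. x \<in> trace_hyp k F}"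
    using finite by (intro card_image_le) auto
  finally show ?thesis .
qed


lemma trace_hyp_Int_mass_le:
  assumes k: "k \<in> {6..21}" and F: "F \<in> Nk k" "F' \<in> Nk k"
  shows "(\<Sum>x\<in>trace_hyp k F \<inter> trace_hyp k F'. P (k - 1) x)
       \<le> hyp_mass_bound ((F - {k}) \<union> (F' - {k}))"
proof -
  define v where "v j = (if j \<in> F - {k} then a F j else a F' j)" for j
  have "trace_hyp k F \<inter> trace_hyp k F' \<subseteq> hyp (k - 1) ((F - {k}) \<union> (F' - {k})) v"
    by (auto simp: trace_hyp_def hyp_def v_def)
  then have "(\<Sum>x\<in>trace_hyp k F \<inter> trace_hyp k F'. P (k - 1) x)
      \<le> (\<Sum>x\<in>hyp (k - 1) ((F - {k}) \<union> (F' - {k})) v. P (k - 1) x)"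
    using k by (intro sum_mono2) (auto simp: hyp_def intro!: Pk_nonneg)
  also have "\<dots> \<le> hyp_mass_bound ((F - {k}) \<union> (F' - {k}))"
    using k F by (intro hyp_mass_le) (auto simp: Nk_def subset_iff)
  finally show ?thesis .
qed

lemma trace_index:
  assumes "k \<le> 21"
  shows "(\<lambda>F. F - {k}) ` Nk k \<subseteq> Pow {2..k - 1} - {{}}"
    and "inj_on (\<lambda>F. F - {k}) (Nk k)"
proof -
  have "F - {k} \<noteq> {}" if "F \<in> Nk k" for F
  proof
    assume "F - {k} = {}"
    moreover have "k \<in> F" using that by (simp add: Nk_def)
    ultimately have "F = {k}" by auto
    then have "{k} \<in> FF" using that by (simp add: Nk_def)
    then show False using singleton_large assms by fastforce
  qed
  then show "(\<lambda>F. F - {k}) ` Nk k \<subseteq> Pow {2..k - 1} - {{}}"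
    by (auto simp: Nk_def subset_iff)
  show "inj_on (\<lambda>F. F - {k}) (Nk k)"
    by (rule inj_onI) (auto simp: Nk_def dest: insert_Diff)
qed

lemma second_moment_le:
  assumes k: "k \<in> {6..21}"
  shows "(\<Sum>x\<in>Qset (k - 1). P (k - 1) x * real (card {F \<in> Nk k. x \<in> trace_hyp k F}) ^ 2)
       \<le> (\<Sum>G\<in>Pow {2..k - 1} - {{}}. \<Sum>G'\<in>Pow {2..k - 1} - {{}}. hyp_mass_bound (G \<union> G'))"
proof -
  let ?N = "Nk k" and ?T = "trace_hyp k" and ?E = "Pow {2..k - 1} - {{}}"
    and ?D = "(\<lambda>F. F - {k}) ` Nk k"
  have "finite ?N" by (rule finite_subset[of _ "Pow {2..k}"]) (auto simp: Nk_def)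
  moreover have "?T F \<subseteq> Qset (k - 1)" for F by (auto simp: trace_hyp_def hyp_def)
  ultimately have "(\<Sum>x\<in>Qset (k - 1). P (k - 1) x * real (card {F \<in> ?N. x \<in> ?T F}) ^ 2)
      = (\<Sum>F\<in>?N. \<Sum>F'\<in>?N. \<Sum>x\<in>?T F \<inter> ?T F'. P (k - 1) x)"
    by (intro sum_mult_card_sq) auto
  also have "\<dots> \<le> (\<Sum>F\<in>?N. \<Sum>F'\<in>?N. hyp_mass_bound ((F - {k}) \<union> (F' - {k})))"
    using k by (intro sum_mono trace_hyp_Int_mass_le)
  also have "\<dots> = (\<Sum>G\<in>?D. \<Sum>G'\<in>?D. hyp_mass_bound (G \<union> G'))"
    using trace_index(2)[of k] k by (simp add: sum.reindex)
  also have "\<dots> \<le> (\<Sum>G\<in>?E. \<Sum>G'\<in>?E. hyp_mass_bound (G \<union> G'))"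
    unfolding sum.cartesian_product
  proof (rule sum_mono2)
    show "?D \<times> ?D \<subseteq> ?E \<times> ?E" using trace_index(1)[of k] k by auto
    show "0 \<le> (case GG' of (G, G') \<Rightarrow> hyp_mass_bound (G \<union> G'))"
      if GG': "GG' \<in> ?E \<times> ?E - ?D \<times> ?D" for GG'
    proof -
      obtain G G' where "GG' = (G, G')" "G \<union> G' \<subseteq> {2..21}"
        using GG' k by fastforce
      then show ?thesis by (simp add: hyp_mass_bound_nonneg)
    qed
  qed simp
  finally show ?thesis .
qed

lemma Pk_Bk_le:
  assumes k: "k \<in> {6..21}" and M: "0 \<le> M"
    and excess: "\<And>j. j \<le> card (S k) \<Longrightarrow>
      max 0 ((real j / real (card (S k)) - \<delta> k) / (1 - \<delta> k)) \<le> M * (real j / real (card (S k))) ^ 2"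
  shows "(\<Sum>z\<in>Bk FF a k. P k z)
       \<le> M / real (card (S k)) ^ 2 * (ck P5 \<delta> (k - 1) 3 - 2 * ck P5 \<delta> (k - 1) 1 + 1)"
proof -
  let ?s = "real (card (S k))" and ?n = "\<lambda>x. real (card {F \<in> Nk k. x \<in> trace_hyp k F})"
  have "(\<Sum>z\<in>Bk FF a k. P k z)
      = (\<Sum>x\<in>Qset (k - 1). P (k - 1) x * max 0 ((alpha FF a k x - \<delta> k) / (1 - \<delta> k)))"
    by (rule sum_Pk_Bk[OF k])
  also have "\<dots> \<le> (\<Sum>x\<in>Qset (k - 1). P (k - 1) x * (M / ?s ^ 2 * ?n x ^ 2))"
  proof (rule sum_mono)
    fix x assume x: "x \<in> Qset (k - 1)"
    have "max 0 ((alpha FF a k x - \<delta> k) / (1 - \<delta> k)) \<le> M * (real (card (Bk_fibre k x)) / ?s) ^ 2"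
      using excess card_mono[OF finite_S Bk_fibre_subset] by (simp add: alpha_eq)
    also have "\<dots> = M / ?s ^ 2 * real (card (Bk_fibre k x)) ^ 2"
      by (simp add: power_divide)
    also have "\<dots> \<le> M / ?s ^ 2 * ?n x ^ 2"
      using card_Bk_fibre_le[OF x] M by (intro mult_left_mono power_mono) auto
    finally show "P (k - 1) x * max 0 ((alpha FF a k x - \<delta> k) / (1 - \<delta> k))
        \<le> P (k - 1) x * (M / ?s ^ 2 * ?n x ^ 2)"
      using x k by (intro mult_left_mono Pk_nonneg) auto
  qed
  also have "\<dots> = M / ?s ^ 2 * (\<Sum>x\<in>Qset (k - 1). P (k - 1) x * ?n x ^ 2)"
    by (simp add: sum_distrib_left algebra_simps)
  also have "\<dots> \<le> M / ?s ^ 2 *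
      (\<Sum>G\<in>Pow {2..k - 1} - {{}}. \<Sum>G'\<in>Pow {2..k - 1} - {{}}. hyp_mass_bound (G \<union> G'))"
    using second_moment_le[OF k] M by (intro mult_left_mono) auto
  also have "(\<Sum>G\<in>Pow {2..k - 1} - {{}}. \<Sum>G'\<in>Pow {2..k - 1} - {{}}. hyp_mass_bound (G \<union> G'))
      = ck P5 \<delta> (k - 1) 3 - 2 * ck P5 \<delta> (k - 1) 1 + 1"
  proof -
    have k5: "5 \<le> k - 1" using k by auto
    show ?thesis
      using sum_Pow_hyp_mass_bound[OF k5, of 3] sum_Pow_hyp_mass_bound[OF k5, of 1]
      by (simp add: sum_nonempty_Pow_Pow_union hyp_mass_bound_empty)
  qed
  finally show ?thesis .
qed

lemma mu_ge:
  assumes M_nonneg: "\<And>k. k \<in> {6..21} \<Longrightarrow> 0 \<le> M k"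
    and excess: "\<And>k j. k \<in> {6..21} \<Longrightarrow> j \<le> card (S k) \<Longrightarrow>
      max 0 ((real j / real (card (S k)) - \<delta> k) / (1 - \<delta> k)) \<le> M k * (real j / real (card (S k))) ^ 2"
  shows "1 - (c5 P5 3 * loss_coeff \<delta> M 3 - 2 * c5 P5 1 * loss_coeff \<delta> M 1 + loss_coeff \<delta> M 0)
       \<le> mu FF a P5 \<delta> 21"
proof -
  let ?w = "\<lambda>k t. M k / real (card (S k)) ^ 2 *
      (\<Prod>j=6..k - 1. 1 + t / ((1 - \<delta> j) * real (card (S j))))"
  have "(\<Sum>k=6..21. \<Sum>z\<in>Bk FF a k. P k z)
      \<le> (\<Sum>k=6..21. M k / real (card (S k)) ^ 2 * (ck P5 \<delta> (k - 1) 3 - 2 * ck P5 \<delta> (k - 1) 1 + 1))"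
    by (intro sum_mono Pk_Bk_le M_nonneg excess)
  also have "\<dots> = (\<Sum>k=6..21. c5 P5 3 * ?w k 3 - 2 * c5 P5 1 * ?w k 1 + ?w k 0)"
    by (intro sum.cong) (simp_all add: ck_def algebra_simps)
  also have "\<dots> = c5 P5 3 * loss_coeff \<delta> M 3 - 2 * c5 P5 1 * loss_coeff \<delta> M 1 + loss_coeff \<delta> M 0"
    by (simp add: loss_coeff_def sum.distrib sum_subtractf sum_distrib_left)
  finally show ?thesis by (simp add: mu_def)
qed

lemma c5_bounds: "1 \<le> c5 P5 1" "3 * c5 P5 1 - 2 \<le> c5 P5 3"
proof -
  let ?E = "Pow {2..5::nat} - {{}}"
  have split: "c5 P5 t = 1 + (\<Sum>I\<in>?E. cI P5 I * t ^ card I)" for t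
    unfolding c5_def by (simp add: sum_diff1 cI_empty)
  have nonneg: "0 \<le> cI P5 I" if "I \<in> ?E" for I
    using that by (intro cI_nonneg) (auto intro: finite_subset)
  have "3 * cI P5 I \<le> cI P5 I * 3 ^ card I" if "I \<in> ?E" for I
  proof -
    have "finite I" "I \<noteq> {}" using that finite_subset by auto
    then have "card I \<noteq> 0" by simp
    then have "(3::real) ^ 1 \<le> 3 ^ card I" by (intro power_increasing) auto
    then show ?thesis using nonneg[OF that] by (simp add: mult.commute mult_left_mono)
  qed
  then have "3 * (\<Sum>I\<in>?E. cI P5 I) \<le> (\<Sum>I\<in>?E. cI P5 I * 3 ^ card I)"
    unfolding sum_distrib_left by (rule sum_mono)
  then show "3 * c5 P5 1 - 2 \<le> c5 P5 3" unfolding split by simp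
  have "0 \<le> (\<Sum>I\<in>?E. cI P5 I)" using nonneg by (rule sum_nonneg)
  then show "1 \<le> c5 P5 1" unfolding split by simp
qed

end


section \<open>Choice of the parameters\<close>

definition delta_choice :: "nat \<Rightarrow> real" where
  "delta_choice k = [0.186, 0.202, 0.235, 0.238, 0.223, 0.241, 0.229, 0.239,
                     0.244, 0.245, 0.245, 0.246, 0.254, 0.254, 0.254, 0.261] ! (k - 6)"

text \<open>\<open>M_choice k\<close> is the least constant admissible in \<open>M_choice_excess_bound\<close>, the maximum of
  \<open>(j / s - \<delta>\<^sub>k) / ((1 - \<delta>\<^sub>k) (j / s)\<^sup>2)\<close> over \<open>1 \<le> j \<le> s = |S\<^sub>k|\<close>, rounded up.\<close>

definition M_choice :: "nat \<Rightarrow> real" where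
  "M_choice k = [1.633, 1.542, 1.387, 1.376, 1.441, 1.366, 1.415, 1.375,
                 1.355, 1.351, 1.352, 1.348, 1.32, 1.32, 1.32, 1.296] ! (k - 6)"

lemmas choice_simps = atLeastLessThanSuc_atLeastAtMost[symmetric] atLeastLessThan_nat_numeral
  card_S_small small_primes_def delta_choice_def M_choice_def

lemma delta_choice_bounds:
  assumes "k \<in> {6..21}"
  shows "0 < delta_choice k \<and> delta_choice k \<le> 1/2"
proof -
  have "\<forall>k\<in>{6..21}. 0 < delta_choice k \<and> delta_choice k \<le> 1/2"
    by (simp add: choice_simps)
  then show ?thesis using assms by blast
qed

lemma M_choice_pos:
  assumes "k \<in> {6..21}"
  shows "0 < M_choice k"
proof -
  have "\<forall>k\<in>{6..21}. 0 < M_choice k"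
    by (simp add: choice_simps)
  then show ?thesis using assms by blast
qed

lemma M_choice_excess_bound:
  assumes k: "k \<in> {6..21}"
  shows "max 0 ((real j / real (card (S k)) - delta_choice k) / (1 - delta_choice k))
       \<le> M_choice k * (real j / real (card (S k))) ^ 2"
proof -
  have "\<forall>k\<in>{6..21}.
     (let d = delta_choice k; A = M_choice k * (1 - d); s = real (card (S k));
          m = real_of_int \<lfloor>s / (2 * A)\<rfloor>
      in 0 \<le> A * m ^ 2 - s * m + d * s ^ 2 \<and> 0 \<le> A * (m + 1) ^ 2 - s * (m + 1) + d * s ^ 2)"
    by (simp add: choice_simps Let_def)
  then show ?thesis
    using k delta_choice_bounds[OF k] M_choice_pos[OF k] card_S_pos[of k] unfolding Let_def
    by (intro excess_le_quadratic) auto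
qed

lemma loss_coeff_choice_bounds:
  "loss_coeff delta_choice M_choice 3 \<le> 0.06187"
  "0.04017 \<le> loss_coeff delta_choice M_choice 1"
  "loss_coeff delta_choice M_choice 0 \<le> 0.0333"
  by (simp_all add: loss_coeff_def choice_simps)

lemma ck_choice_factor_le:
  "(\<Prod>j=6..21. 1 + 3 / ((1 - delta_choice j) * real (card (S j)))) \<le> 6.2841"
  by (simp add: choice_simps)

theorem lemma5p3:
  fixes n :: nat and \<F> :: "nat set set" and a :: "nat set \<Rightarrow> nat \<Rightarrow> nat"
    and P5 :: "(nat \<Rightarrow> nat) \<Rightarrow> real"
  assumes "n \<ge> 21"
    and "valid_collection n \<F> a"
    and "prob_on_R5 \<F> a P5"
    and "c5 P5 3 - 3/4 * c5 P5 1 \<le> 9.019"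
  shows "\<exists>\<delta> :: nat \<Rightarrow> real. (\<forall>j\<in>{6..21}. 0 < \<delta> j \<and> \<delta> j \<le> 1/2) \<and>
           mu \<F> a P5 \<delta> 21 > 0 \<and>
           ck P5 \<delta> 21 3 / mu \<F> a P5 \<delta> 21 < 138.874"
proof -
  interpret distortion \<F> a P5 delta_choice
    using assms(2,3) delta_choice_bounds unfolding valid_collection_def prob_on_R5_def
    by unfold_locales fastforce+
  let ?L = "loss_coeff delta_choice M_choice" and ?\<mu> = "mu \<F> a P5 delta_choice 21"
  define X Y where "X = c5 P5 3" and "Y = c5 P5 1"
  have XY: "1 \<le> Y" "3 * Y - 2 \<le> X" "X - 3/4 * Y \<le> 9.019"
    using c5_bounds assms(4) by (simp_all add: X_def Y_def)
  have "1 - (X * ?L 3 - 2 * Y * ?L 1 + ?L 0) \<le> ?\<mu>"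
    unfolding X_def Y_def
    using M_choice_pos by (intro mu_ge M_choice_excess_bound) (auto intro: less_imp_le)
  moreover have "X * ?L 3 \<le> X * 0.06187" and "Y * 0.04017 \<le> Y * ?L 1"
    using XY loss_coeff_choice_bounds by (intro mult_left_mono; simp)+
  ultimately have mu: "1 - (0.06187 * X - 0.08034 * Y + 0.0333) \<le> ?\<mu>"
    using loss_coeff_choice_bounds(3) by simp
  have ck: "ck P5 delta_choice 21 3 \<le> 6.2841 * X"
    unfolding ck_def X_def[symmetric] using XY ck_choice_factor_le by (simp add: mult_left_mono)
  \<comment> \<open>\<open>XY\<close> confines \<open>(X, Y)\<close> to a triangle, on whose vertices this linear inequality holds.\<close>
  have "6.2841 * X < 138.874 * (1 - (0.06187 * X - 0.08034 * Y + 0.0333))"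
    using XY by simp
  then have "0 < ?\<mu>" and "ck P5 delta_choice 21 3 < 138.874 * ?\<mu>"
    using mu ck XY by simp_all
  then show ?thesis
    using delta_choice_bounds by (intro exI[of _ delta_choice]) (simp add: pos_divide_less_eq)
qed

end
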